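(* Let $A$ be a totally ordered finite alphabet and let $w\in A^*$ be a primitive word. The following conditions are equivalent: (i) $w$ is a perfectly clustering Lyndon word; (ii) $w$ is a product of two palindromes, and $w$ has a palindromic special factorization; (iii) $w$ has a special factorization $w=a_1\pi_1a_2\pi_2\cdots\pi_{k-1}a_k$ such that $w$ is conjugate to $W=a_k\pi_{k-1}a_{k-1}\cdots a_2\pi_1a_1$.
   Context: For $w\in A^*$, $Alph(w)$ is the set of letters occurring in $w$. A special factorization of $w$ is a factorization $w=a_1\pi_1a_2\pi_2\cdots\pi_{k-1}a_k$ where $Alph(w)=\{a_1<a_2<\cdots<a_k\}$ and $\pi_1,\dots,\pi_{k-1}\in A^*$ are arbitrary words. Given such a factorization, $W:=a_k\pi_{k-1}a_{k-1}\cdots\pi_2a_2\pi_1a_1$. The special factorization is palindromic if each $\pi_i$ is a palindrome (equal to its reversal). Two words $u,v$ are conjugate if $u=xy$, $v=yx$ for some words $x,y$. Words are compared in lexicographic order (a proper prefix is smaller). A Lyndon word is a primitive word strictly smaller than all its other conjugates. For a primitive word $v$ of length $n$ with conjugates $v_1<v_2<\cdots<v_n$, its Burrows–Wheeler transform is $\mathrm{bw}(v)=l_1\cdots l_n$, where $l_i$ is the last letter of $v_i$. A primitive word $v$ is perfectly clustering if $\mathrm{bw}(v)$ is weakly decreasing, i.e. $\mathrm{bw}(v)=b_k^{|v|_{b_k}}\cdots b_1^{|v|_{b_1}}$ where $b_1<\cdots<b_k$ are the letters of the alphabet and $|v|_b$ is the number of occurrences of $b$ in $v$. *)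

theory Defs
  imports Main "HOL-Library.List_Lexorder"
begin

text \<open>Words are lists over a linearly ordered alphabet; lists are compared by the
lexicographic order of List_Lexorder (a proper prefix is smaller).\<close>

definition primitive :: "'a list \<Rightarrow> bool" where
  "primitive w \<longleftrightarrow> w \<noteq> [] \<and> \<not> (\<exists>u k. k \<ge> 2 \<and> w = concat (replicate k u))"

definition conjugate :: "'a list \<Rightarrow> 'a list \<Rightarrow> bool" where
  "conjugate u v \<longleftrightarrow> (\<exists>x y. u = x @ y \<and> v = y @ x)"

definition lyndon :: "'a::linorder list \<Rightarrow> bool" where
  "lyndon w \<longleftrightarrow> primitive w \<and> (\<forall>i. 0 < i \<and> i < length w \<longrightarrow> w < rotate i w)"

definition bw :: "'a::linorder list \<Rightarrow> 'a list" where
  "bw v = map last (sort (map (\<lambda>i. rotate i v) [0..<length v]))"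

definition perfectly_clustering :: "'a::linorder list \<Rightarrow> bool" where
  "perfectly_clustering v \<longleftrightarrow> primitive v \<and> sorted_wrt (\<ge>) (bw v)"

definition palindrome :: "'a list \<Rightarrow> bool" where
  "palindrome p \<longleftrightarrow> rev p = p"

text \<open>Special factorization w = a_1 pi_1 a_2 ... pi_(k-1) a_k, where a_1 < ... < a_k are the
letters of w and ps = [pi_1, ..., pi_(k-1)].\<close>
definition special_factorization :: "'a::linorder list \<Rightarrow> 'a list list \<Rightarrow> bool" where
  "special_factorization w ps \<longleftrightarrow>
     w \<noteq> [] \<and> length ps + 1 = card (set w) \<and>
     w = concat (map2 (\<lambda>a p. a # p) (sorted_list_of_set (set w)) (ps @ [[]]))"

text \<open>W = a_k pi_(k-1) a_(k-1) ... pi_2 a_2 pi_1 a_1.\<close>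
definition bigW :: "'a::linorder list \<Rightarrow> 'a list list \<Rightarrow> 'a list" where
  "bigW w ps = concat (map2 (\<lambda>p a. p @ [a]) ([] # rev ps) (rev (sorted_list_of_set (set w))))"

end

theory Submission
  imports Defs
begin

text \<open>
  (iii) implies (i): if W = a_k pi_(k-1) ... pi_1 a_1 is a rotation of w, then every rotation
  of w other than w itself has a strictly smaller rotation whose last letter is not smaller:
  a suffix of pi_j followed by a_(j+1) in w reappears in W followed by a_j. This predecessor
  map is injective, and a counting argument shows that w is its least rotation and that the
  last letters decrease along the sorted rotations.

  (i) implies (ii): for a perfectly clustering word the LF-mapping sends the rank of the
  rotation at t to length w - 1 minus the reflection of that rank inside the block of ranks
  of the letter w ! t. The successor map on ranks is thus a product of two involutions,
  whence w is a product of two palindromes. The positions of the least rotations starting with each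
  letter cut w into gaps which the same symmetry pairs as mirror images; counting letters of
  even multiplicity against self-paired gaps shows that every gap is paired with itself. So
  these positions carry a_1, ..., a_k in increasing order and the gaps are palindromes.

  (ii) implies (iii): a palindromic special factorization gives W = rev w, a conjugate of w
  when w is a product of two palindromes.
\<close>

declare rotate_Suc [simp del]

section \<open>Rotations\<close>

lemma primitive_rotate_neq_self:
  assumes "primitive w" "0 < d" "d < length w"
  shows "rotate d w \<noteq> w"
proof
  assume rot: "rotate d w = w"
  have "take d w @ drop d w = drop d w @ take d w"
    using rot assms(3) by (simp add: rotate_drop_take)
  then obtain m1 m2 u where u: "concat (replicate m1 u) = take d w" "concat (replicate m2 u) = drop d w"
    using comm_append_are_replicate by blast
  have "take d w \<noteq> []" "drop d w \<noteq> []"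
    using assms(2,3) by auto
  then have "m1 \<noteq> 0" "m2 \<noteq> 0"
    using u by (metis concat_replicate_trivial replicate_0)+
  then have "2 \<le> m1 + m2" by simp
  moreover have "w = concat (replicate (m1 + m2) u)"
    by (metis append_take_drop_id concat_append replicate_add u)
  ultimately show False
    using assms(1) unfolding primitive_def by blast
qed

lemma primitive_inj_on_rotate:
  assumes "primitive w"
  shows "inj_on (\<lambda>i. rotate i w) {..<length w}"
proof -
  have "rotate i w \<noteq> rotate j w" if "i < j" "j < length w" for i j
  proof
    assume "rotate i w = rotate j w"
    then have "rotate (length w - i) (rotate i w) = rotate (length w - i) (rotate j w)" by simp
    then have "w = rotate ((j - i) + length w) w"
      using that by (simp add: rotate_rotate algebra_simps)
    then have "rotate (j - i) w = w"
      by (metis rotate_conv_mod mod_add_self2)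
    then show False
      using primitive_rotate_neq_self[OF assms, of "j - i"] that by simp
  qed
  then show ?thesis
    by (intro inj_onI) (metis lessThan_iff linorder_neqE_nat)
qed

lemma rotate_conv_drop_take:
  "n \<le> length xs \<Longrightarrow> rotate n xs = drop n xs @ take n xs"
  by (metis append_take_drop_id length_take min.absorb2 rotate_append)

lemma rotate_conv_nth_Cons:
  "t < length w \<Longrightarrow> rotate t w = w ! t # drop (Suc t) w @ take t w"
  by (simp add: rotate_conv_drop_take Cons_nth_drop_Suc)

lemma rotate_Suc_conv_snoc:
  "t < length w \<Longrightarrow> rotate (Suc t) w = drop (Suc t) w @ take t w @ [w ! t]"
  by (simp add: rotate_conv_drop_take take_Suc_conv_app_nth)

lemma last_rotate_Suc: "t < length w \<Longrightarrow> last (rotate (Suc t) w) = w ! t"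
  by (simp add: rotate_Suc_conv_snoc)

lemma append_Cons_less:
  fixes a b :: "'a::linorder"
  assumes "a < b"
  shows "xs @ a # ys < xs @ b # zs"
  using assms by (induction xs) auto

lemma snoc_less_snoc_iff:
  fixes c :: "'a::linorder"
  assumes "length xs = length ys"
  shows "xs @ [c] < ys @ [c] \<longleftrightarrow> xs < ys"
  using assms by (induction xs ys rule: list_induct2) auto

lemma rotate_less_rotate_if_nth_less:
  fixes w :: "'a::linorder list"
  shows "u < length w \<Longrightarrow> t < length w \<Longrightarrow> w ! u < w ! t \<Longrightarrow> rotate u w < rotate t w"
  by (simp add: rotate_conv_nth_Cons)

lemma nth_le_nth_if_rotate_less:
  fixes w :: "'a::linorder list"
  shows "u < length w \<Longrightarrow> t < length w \<Longrightarrow> rotate u w < rotate t w \<Longrightarrow> w ! u \<le> w ! t"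
  by (auto simp: rotate_conv_nth_Cons Cons_less_Cons)

lemma rotate_Suc_less_iff_same_nth:
  fixes w :: "'a::linorder list"
  assumes "u < length w" "t < length w" "w ! u = w ! t"
  shows "rotate (Suc u) w < rotate (Suc t) w \<longleftrightarrow> rotate u w < rotate t w"
  using assms snoc_less_snoc_iff[of "drop (Suc u) w @ take u w" "drop (Suc t) w @ take t w" "w ! t"]
  by (simp add: rotate_conv_nth_Cons rotate_Suc_conv_snoc)

lemma mod_add_right_cancel_less:
  fixes a b r n :: nat
  assumes "(a + r) mod n = (b + r) mod n" "a < n" "b < n"
  shows "a = b"
proof -
  have "a mod n = b mod n"
    using assms(1) by (simp add: nat_mod_eq_iff)
  then show ?thesis using assms(2,3) by simp
qed

lemma bij_betw_Suc_mod: "bij_betw (\<lambda>u. Suc u mod n) {..<n} {..<n}"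
proof -
  have "inj_on (\<lambda>u. Suc u mod n) {..<n}"
    by (intro inj_onI) (metis Suc_eq_plus1 lessThan_iff mod_add_right_cancel_less)
  moreover have "(\<lambda>u. Suc u mod n) ` {..<n} \<subseteq> {..<n}"
    by auto
  ultimately show ?thesis
    by (simp add: bij_betw_def endo_inj_surj)
qed

lemma card_preimage_bij_betw:
  assumes "bij_betw f A B"
  shows "card {x \<in> A. Q (f x)} = card {y \<in> B. Q y}"
proof (rule bij_betw_same_card)
  have "f ` {x \<in> A. Q (f x)} = {y \<in> B. Q y}"
    using bij_betw_imp_surj_on[OF assms] by blast
  moreover have "inj_on f {x \<in> A. Q (f x)}"
    using bij_betw_imp_inj_on[OF assms] by (rule inj_on_subset) blast
  ultimately show "bij_betw f {x \<in> A. Q (f x)} {y \<in> B. Q y}"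
    by (simp add: bij_betw_def)
qed

lemma card_rotate_Suc:
  "card {u. u < length w \<and> P (rotate (Suc u) w)} = card {u. u < length w \<and> P (rotate u w)}"
proof -
  have "rotate (Suc u) w = rotate (Suc u mod length w) w" for u
    by (rule rotate_conv_mod)
  then have "card {u. u < length w \<and> P (rotate (Suc u) w)}
      = card {u \<in> {..<length w}. (\<lambda>v. P (rotate v w)) (Suc u mod length w)}"
    by simp
  also have "\<dots> = card {u. u < length w \<and> P (rotate u w)}"
    using card_preimage_bij_betw[OF bij_betw_Suc_mod] by simp
  finally show ?thesis .
qed

lemma perfectly_clustering_iff:
  "perfectly_clustering w \<longleftrightarrow> primitive w \<and>
     (\<forall>x<length w. \<forall>y<length w. rotate x w < rotate y w \<longrightarrow> last (rotate y w) \<le> last (rotate x w))"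
proof -
  define L where "L = sort (map (\<lambda>i. rotate i w) [0..<length w])"
  have "sorted_wrt (\<ge>) (bw w) \<longleftrightarrow> sorted_wrt (\<lambda>a b. last b \<le> last a) L"
    unfolding bw_def L_def by (simp add: sorted_wrt_map)
  also have "\<dots> \<longleftrightarrow> (\<forall>a\<in>set L. \<forall>b\<in>set L. a < b \<longrightarrow> last b \<le> last a)"
  proof
    assume sw: "sorted_wrt (\<lambda>a b. last b \<le> last a) L"
    show "\<forall>a\<in>set L. \<forall>b\<in>set L. a < b \<longrightarrow> last b \<le> last a"
    proof (intro ballI impI)
      fix a b assume "a \<in> set L" "b \<in> set L" "a < b"
      then obtain i j where "i < length L" "j < length L" "L ! i = a" "L ! j = b"
        by (auto simp: in_set_conv_nth)
      moreover have "sorted L" unfolding L_def by simp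
      ultimately show "last b \<le> last a"
        using sw \<open>a < b\<close> by (metis leD linorder_neqE_nat sorted_nth_mono less_imp_le sorted_wrt_nth_less)
    qed
  next
    assume "\<forall>a\<in>set L. \<forall>b\<in>set L. a < b \<longrightarrow> last b \<le> last a"
    moreover have "sorted L" unfolding L_def by simp
    ultimately show "sorted_wrt (\<lambda>a b. last b \<le> last a) L"
      by (elim sorted_wrt_mono_rel[rotated]) (auto simp: order.order_iff_strict)
  qed
  also have "\<dots> \<longleftrightarrow>
      (\<forall>x<length w. \<forall>y<length w. rotate x w < rotate y w \<longrightarrow> last (rotate y w) \<le> last (rotate x w))"
    unfolding L_def by auto
  finally show ?thesis unfolding perfectly_clustering_def by simp
qed

section \<open>Orders with an injective predecessor map\<close>

locale injective_predecessor =
  fixes n :: nat and key :: "nat \<Rightarrow> 'b::linorder" and lab :: "nat \<Rightarrow> 'c::order" and pre :: "nat \<Rightarrow> nat"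
  assumes key_inj: "inj_on key {..<n}"
    and pre: "\<And>v. 0 < v \<Longrightarrow> v < n \<Longrightarrow> pre v < n \<and> key (pre v) < key v \<and> lab v \<le> lab (pre v)"
    and pre_inj: "inj_on pre {0<..<n}"
begin

lemma key_0_least:
  assumes "y < n"
  shows "key 0 \<le> key y"
proof -
  obtain m where m: "m < n" "key m = Min (key ` {..<n})"
    using Min_in[of "key ` {..<n}"] assms by fastforce
  then have least: "key m \<le> key z" if "z < n" for z
    using that by simp
  have "m = 0"
    using pre[of m] m least by (metis leD neq0_conv)
  then show ?thesis using least assms by simp
qed

lemma pre_image:
  assumes "y < n"
  shows "pre ` {v. 0 < v \<and> v < n \<and> key v \<le> key y} = {u. u < n \<and> key u < key y}"
proof (rule card_subset_eq)
  let ?A = "{v. 0 < v \<and> v < n \<and> key v \<le> key y}" and ?B = "{u. u < n \<and> key u < key y}"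
  show "pre ` ?A \<subseteq> ?B"
    using pre by (auto intro: less_le_trans)
  have "{v. v < n \<and> key v \<le> key y} = insert y ?B"
    using inj_onD[OF key_inj] assms by (auto simp: le_less)
  moreover have "{v. v < n \<and> key v \<le> key y} = insert 0 ?A"
    using key_0_least assms by auto
  moreover have "finite ?A" "finite ?B" by auto
  ultimately have "card ?A = card ?B"
    by (metis (no_types, lifting) card_insert_disjoint less_irrefl mem_Collect_eq nat.inject)
  moreover have "inj_on pre ?A"
    using pre_inj by (rule inj_on_subset) auto
  ultimately show "card (pre ` ?A) = card ?B"
    by (simp add: card_image)
qed simp

lemma pre_immediate:
  assumes "0 < v" "v < n" "z < n"
  shows "\<not> (key (pre v) < key z \<and> key z < key v)"
proof
  assume between: "key (pre v) < key z \<and> key z < key v"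
  then have "pre v \<in> pre ` {v. 0 < v \<and> v < n \<and> key v \<le> key z}"
    using pre_image[OF assms(3)] pre assms by auto
  then obtain v' where "0 < v'" "v' < n" "key v' \<le> key z" "pre v = pre v'" by auto
  then have "v' = v" using pre_inj assms by (auto dest: inj_onD)
  then show False using between \<open>key v' \<le> key z\<close> by (simp add: leD)
qed

lemma lab_antimono:
  assumes "x < n" "y < n" "key x < key y"
  shows "lab y \<le> lab x"
  using assms
proof (induction "card {z. z < n \<and> key z < key y}" arbitrary: y rule: less_induct)
  case less
  have "y \<noteq> 0" using key_0_least less.prems by (metis leD)
  then have p: "pre y < n" "key (pre y) < key y" "lab y \<le> lab (pre y)"
    using pre less.prems by auto
  show ?case
  proof (cases "x = pre y")
    case False
    then have "key x \<noteq> key (pre y)"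
      using inj_onD[OF key_inj] less.prems p by blast
    then have "key x < key (pre y)"
      using pre_immediate[of y x] less.prems \<open>y \<noteq> 0\<close> by auto
    moreover have "card {z. z < n \<and> key z < key (pre y)} < card {z. z < n \<and> key z < key y}"
      using p by (intro psubset_card_mono) auto
    ultimately have "lab (pre y) \<le> lab x" using less p by blast
    then show ?thesis using p by simp
  qed (use p in simp)
qed

end

section \<open>Special factorizations\<close>

abbreviation letters :: "'a::linorder list \<Rightarrow> 'a list" where
  "letters w \<equiv> sorted_list_of_set (set w)"

lemma letters_nth_less: "i < j \<Longrightarrow> j < card (set w) \<Longrightarrow> letters w ! i < letters w ! j"
  using sorted_list_of_set.strict_sorted_key_list_of_set[of "set w"] by (simp add: sorted_wrt_iff_nth_less)

lemma letters_nth_eq_iff: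
  "i < card (set w) \<Longrightarrow> j < card (set w) \<Longrightarrow> letters w ! i = letters w ! j \<longleftrightarrow> i = j"
  using nth_eq_iff_index_eq[OF distinct_sorted_list_of_set] by (metis length_sorted_list_of_set)

lemma letters_nth_in_set: "i < card (set w) \<Longrightarrow> letters w ! i \<in> set w"
  using nth_mem[of i "letters w"] by simp

lemma letters_index:
  assumes "c \<in> set w"
  shows "\<exists>i<card (set w). letters w ! i = c"
proof -
  have "c \<in> set (letters w)" using assms by simp
  then show ?thesis by (simp only: in_set_conv_nth length_sorted_list_of_set)
qed

text \<open>interleave [a_1, ..., a_k] [pi_1, ..., pi_(k-1)] is the word a_1 pi_1 a_2 ... pi_(k-1) a_k,
  and its j-th block as ! j # ps ! j (counting from 0) starts at position block_start ps j.\<close>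

definition interleave :: "'a list \<Rightarrow> 'a list list \<Rightarrow> 'a list" where
  "interleave as ps = concat (map2 (\<lambda>a p. a # p) as (ps @ [[]]))"

definition block_start :: "'a list list \<Rightarrow> nat \<Rightarrow> nat" where
  "block_start ps j = (\<Sum>q\<leftarrow>take j ps. Suc (length q))"

lemma interleave_Cons_Cons [simp]: "interleave (a # as) (p # ps) = a # p @ interleave as ps"
  by (simp add: interleave_def)

lemma interleave_single [simp]: "interleave [a] [] = [a]"
  by (simp add: interleave_def)

lemma interleave_snoc:
  "length as = Suc (length ps) \<Longrightarrow> interleave (as @ [a]) (ps @ [p]) = interleave as ps @ p @ [a]"
proof (induction ps arbitrary: as)
  case Nil
  then show ?case by (cases as) auto
next
  case (Cons q ps)
  then show ?case by (cases as) auto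
qed

lemma rev_interleave:
  "length as = Suc (length ps) \<Longrightarrow> rev (interleave as ps) = interleave (rev as) (rev (map rev ps))"
proof (induction ps arbitrary: as)
  case Nil
  then show ?case by (cases as) auto
next
  case (Cons p ps)
  then obtain a as' where "as = a # as'" by (cases as) auto
  with Cons show ?case by (simp add: interleave_snoc)
qed

lemma length_interleave:
  "length as = Suc (length ps) \<Longrightarrow> length (interleave as ps) = Suc (\<Sum>q\<leftarrow>ps. Suc (length q))"
proof (induction ps arbitrary: as)
  case Nil
  then show ?case by (cases as) auto
next
  case (Cons p ps)
  then show ?case by (cases as) auto
qed

lemma block_start_Cons_0 [simp]: "block_start (q # qs) 0 = 0"
  and block_start_Cons_Suc [simp]: "block_start (q # qs) (Suc j) = Suc (length q) + block_start qs j"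
  by (simp_all add: block_start_def)

lemma drop_interleave:
  assumes "length as = Suc (length ps)" "j < length ps" "m \<le> length (ps ! j)"
  shows "\<exists>R. drop (block_start ps j + m) (interleave as ps) = drop m (as ! j # ps ! j) @ as ! Suc j # R"
  using assms
proof (induction ps arbitrary: as j)
  case Nil
  then show ?case by simp
next
  case (Cons p ps)
  then obtain a as' where as: "as = a # as'" "length as' = Suc (length ps)" by (cases as) auto
  show ?case
  proof (cases j)
    case 0
    obtain b bs where "as' = b # bs" using as by (cases as') auto
    moreover obtain R where "interleave (b # bs) ps = b # R"
      by (cases ps) (auto simp: interleave_def)
    moreover have "drop m ((a # p) @ b # R) = drop m (a # p) @ b # R"
      using Cons.prems 0 by (subst drop_append) simp
    ultimately show ?thesis using Cons.prems as 0 by auto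
  next
    case (Suc i)
    then show ?thesis using Cons.IH[OF as(2), of i] Cons.prems as by simp
  qed
qed

lemma bij_betw_block_positions:
  "bij_betw (\<lambda>(j, m). block_start ps j + m) {(j, m). j < length ps \<and> m \<le> length (ps ! j)}
     {..<\<Sum>q\<leftarrow>ps. Suc (length q)}"
proof (induction ps)
  case Nil
  then show ?case by (simp add: bij_betw_def)
next
  case (Cons p ps)
  let ?I = "\<lambda>ps. {(j, m). j < length ps \<and> m \<le> length (ps ! j)}"
  let ?pos = "\<lambda>ps. \<lambda>(j, m). block_start ps j + m"
  have split: "?I (p # ps) = {(0, m) | m. m \<le> length p} \<union> (\<lambda>(j, m). (Suc j, m)) ` ?I ps"
    by (auto simp: less_Suc_eq_0_disj image_iff)
  have "?pos (p # ps) ` {(0, m) | m. m \<le> length p} = {..<Suc (length p)}"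
    by (auto simp: image_iff)
  moreover have "?pos (p # ps) ` (\<lambda>(j, m). (Suc j, m)) ` ?I ps = (\<lambda>x. Suc (length p) + x) ` ?pos ps ` ?I ps"
    by (simp add: image_image case_prod_beta add.assoc)
  moreover have "{..<Suc (length p)} \<union> (\<lambda>x. Suc (length p) + x) ` {..<\<Sum>q\<leftarrow>ps. Suc (length q)}
      = {..<\<Sum>q\<leftarrow>p # ps. Suc (length q)}"
  proof -
    have "(\<lambda>x. Suc (length p) + x) ` {..<\<Sum>q\<leftarrow>ps. Suc (length q)}
        = {Suc (length p)..<Suc (length p) + (\<Sum>q\<leftarrow>ps. Suc (length q))}"
      using image_add_atLeastLessThan[of "Suc (length p)" 0] by (simp add: lessThan_atLeast0 add.commute)
    then show ?thesis by (simp add: ivl_disj_un_one(2))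
  qed
  ultimately have "?pos (p # ps) ` ?I (p # ps) = {..<\<Sum>q\<leftarrow>p # ps. Suc (length q)}"
    using Cons.IH unfolding split bij_betw_def image_Un by simp
  moreover have "inj_on (?pos (p # ps)) (?I (p # ps))"
  proof -
    have "inj_on (?pos ps) (?I ps)" using Cons.IH by (simp add: bij_betw_def)
    then show ?thesis
      unfolding split by (auto simp: inj_on_def less_Suc_eq_0_disj)
  qed
  ultimately show ?case by (simp add: bij_betw_def)
qed

lemma special_factorization_imp_interleave:
  assumes "special_factorization w ps"
  shows "w = interleave (letters w) ps"
    and "length (letters w) = Suc (length ps)"
  using assms by (auto simp: special_factorization_def interleave_def)

lemma bigW_eq_interleave:
  assumes "special_factorization w ps"
  shows "bigW w ps = interleave (rev (letters w)) (rev ps)"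
proof -
  have "length (rev ps) = length (tl (rev (letters w)))"
    using special_factorization_imp_interleave(2)[OF assms] by simp
  moreover have "a # concat (map2 (\<lambda>p b. p @ [b]) qs bs) = interleave (a # bs) qs"
    if "length qs = length bs" for a qs and bs :: "'a list"
    using that by (induction qs bs arbitrary: a rule: list_induct2) (auto simp: interleave_def)
  moreover obtain a as where "rev (letters w) = a # as"
    using special_factorization_imp_interleave(2)[OF assms] by (cases "rev (letters w)") auto
  ultimately show ?thesis by (simp add: bigW_def)
qed

lemma palindromic_bigW_eq_rev:
  assumes "special_factorization w ps" "\<forall>p\<in>set ps. palindrome p"
  shows "bigW w ps = rev w"
proof -
  have "map rev ps = ps"
    using assms(2) by (induction ps) (auto simp: palindrome_def)
  then show ?thesis
    using special_factorization_imp_interleave[OF assms(1)] bigW_eq_interleave[OF assms(1)]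
    by (metis rev_interleave)
qed

lemma conjugate_bigW_if_palindromic:
  assumes "w = x @ y" "palindrome x" "palindrome y"
    and "special_factorization w ps" "\<forall>p\<in>set ps. palindrome p"
  shows "conjugate w (bigW w ps)"
proof -
  have "bigW w ps = y @ x"
    using palindromic_bigW_eq_rev[OF assms(4,5)] assms(1-3) by (simp add: palindrome_def)
  then show ?thesis
    using assms(1) unfolding conjugate_def by blast
qed

lemma drop_conv_nth_take_drop:
  assumes "i < j" "i < length w"
  shows "drop i w = w ! i # take (j - Suc i) (drop (Suc i) w) @ drop j w"
proof -
  have "drop (j - Suc i) (drop (Suc i) w) = drop j w"
    using assms(1) by simp
  then show ?thesis
    using assms(2) by (metis Cons_nth_drop_Suc append_take_drop_id)
qed

lemma interleave_at_positions:
  fixes T :: "nat \<Rightarrow> nat"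
  assumes "length as = Suc K" and mono: "\<And>i. i < K \<Longrightarrow> T i < T (Suc i)"
    and "T 0 = 0" "T K = length w - 1" "w \<noteq> []" and nth: "\<And>i. i \<le> K \<Longrightarrow> w ! T i = as ! i"
  shows "w = interleave as (map (\<lambda>i. take (T (Suc i) - Suc (T i)) (drop (Suc (T i)) w)) [0..<K])"
proof -
  define P where "P i = take (T (Suc i) - Suc (T i)) (drop (Suc (T i)) w)" for i
  have le: "T j \<le> T K" if "j \<le> K" for j
    using that by (induction j rule: inc_induct) (auto dest: mono intro: order.trans less_imp_le)
  have "drop (T j) w = interleave (drop j as) (map P [j..<K])" if "j \<le> K" for j
    using that
  proof (induction j rule: inc_induct)
    case base
    have "drop (length w - 1) w = [w ! (length w - 1)]"
      using assms(5) by (cases w rule: rev_cases) auto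
    moreover have "drop K as = [as ! K]"
      using assms(1) by (metis Cons_nth_drop_Suc drop_all lessI order.refl)
    ultimately show ?case
      using assms(4) nth[of K] by simp
  next
    case (step j)
    have "T j < length w"
      using le[of j] step.hyps assms(4,5) by (cases w) auto
    then have "drop (T j) w = as ! j # P j @ drop (T (Suc j)) w"
      using drop_conv_nth_take_drop[OF mono[OF step.hyps(2)] \<open>T j < length w\<close>] nth[of j] step.hyps
      by (simp add: P_def)
    moreover have "drop j as = as ! j # drop (Suc j) as"
      using step.hyps assms(1) by (simp add: Cons_nth_drop_Suc)
    moreover have "[j..<K] = j # [Suc j..<K]"
      using step.hyps by (simp add: upt_conv_Cons)
    ultimately show ?case
      using step.IH by simp
  qed
  from this[of 0] have "w = interleave as (map P [0..<K])"
    using assms(3) by simp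
  then show ?thesis
    unfolding P_def .
qed

section \<open>Conjugacy of w and W implies perfect clustering\<close>

lemma rotate_after_block_position:
  assumes "length as = Suc (length ps)" "j < length ps" "m \<le> length (ps ! j)"
  defines "p \<equiv> block_start ps j + m"
  obtains R where "rotate (Suc p) (interleave as ps) = drop m (ps ! j) @ as ! Suc j # R"
    and "last (rotate (Suc p) (interleave as ps)) = (as ! j # ps ! j) ! m"
proof -
  let ?x = "interleave as ps"
  obtain R where R: "drop p ?x = drop m (as ! j # ps ! j) @ as ! Suc j # R"
    using drop_interleave[OF assms(1-3)] p_def by blast
  moreover have "drop m (as ! j # ps ! j) = (as ! j # ps ! j) ! m # drop m (ps ! j)"
    using assms(3) by (metis Cons_nth_drop_Suc drop_Suc_Cons le_imp_less_Suc length_Cons)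
  ultimately have drop_p: "drop p ?x = (as ! j # ps ! j) ! m # drop m (ps ! j) @ as ! Suc j # R"
    by simp
  then have "p < length ?x"
    by (metis drop_eq_Nil not_le list.distinct(1))
  moreover have "?x ! p = (as ! j # ps ! j) ! m" "drop (Suc p) ?x = drop m (ps ! j) @ as ! Suc j # R"
    using drop_p \<open>p < length ?x\<close> by (metis Cons_nth_drop_Suc list.inject)+
  ultimately have "rotate (Suc p) ?x = drop m (ps ! j) @ as ! Suc j # R @ take (Suc p) ?x"
    using rotate_conv_drop_take[of "Suc p" ?x] by simp
  moreover have "last (rotate (Suc p) ?x) = (as ! j # ps ! j) ! m"
    using last_rotate_Suc \<open>p < length ?x\<close> \<open>?x ! p = (as ! j # ps ! j) ! m\<close> by metis
  ultimately show ?thesis by (rule that)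
qed

text \<open>If position v - 1 of w lies at offset m of the block a_j pi_j, then rotate v w starts
  with a suffix of pi_j followed by a_(j+1), while bigW w ps has a rotation starting with the
  same suffix of pi_j followed by a_j.\<close>

lemma rotate_bigW_block_less:
  assumes sf: "special_factorization w ps" and W: "bigW w ps = rotate r w"
    and j: "j < length ps" "m \<le> length (ps ! j)"
  defines "v \<equiv> Suc (block_start ps j + m)"
    and "u \<equiv> (Suc (block_start (rev ps) (length ps - 1 - j) + m) + r) mod length w"
  shows "rotate u w < rotate v w" and "last (rotate v w) \<le> last (rotate u w)"
proof -
  define as where "as = letters w"
  define j' where "j' = length ps - 1 - j"
  have w: "w = interleave as ps" and las: "length as = Suc (length ps)"
    using special_factorization_imp_interleave[OF sf] by (simp_all add: as_def)
  have j': "j' < length (rev ps)" "m \<le> length (rev ps ! j')" "rev ps ! j' = ps ! j"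
    "rev as ! j' = as ! Suc j" "rev as ! Suc j' = as ! j"
    using j las by (auto simp: j'_def rev_nth)
  have "rotate u w = rotate (Suc (block_start (rev ps) j' + m)) (bigW w ps)"
    using W by (simp add: u_def j'_def rotate_rotate flip: rotate_conv_mod)
  moreover have "bigW w ps = interleave (rev as) (rev ps)"
    using bigW_eq_interleave[OF sf] by (simp add: as_def)
  moreover obtain R2
    where "rotate (Suc (block_start (rev ps) j' + m)) (interleave (rev as) (rev ps))
             = drop m (rev ps ! j') @ rev as ! Suc j' # R2"
      and "last (rotate (Suc (block_start (rev ps) j' + m)) (interleave (rev as) (rev ps)))
             = (rev as ! j' # rev ps ! j') ! m"
    using rotate_after_block_position[of "rev as" "rev ps" j' m] las j' by auto
  ultimately have R2: "rotate u w = drop m (ps ! j) @ as ! j # R2"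
    and last2: "last (rotate u w) = (as ! Suc j # ps ! j) ! m"
    using j' by simp_all
  obtain R1 where R1: "rotate v w = drop m (ps ! j) @ as ! Suc j # R1"
    and last1: "last (rotate v w) = (as ! j # ps ! j) ! m"
    using rotate_after_block_position[OF las j] w v_def by metis
  have less: "as ! j < as ! Suc j"
    using j(1) las letters_nth_less[of j "Suc j" w] by (simp add: as_def)
  then show "rotate u w < rotate v w"
    using R1 R2 append_Cons_less by metis
  have "(as ! j # ps ! j) ! m \<le> (as ! Suc j # ps ! j) ! m"
    using less by (cases m) auto
  then show "last (rotate v w) \<le> last (rotate u w)"
    using last1 last2 by simp
qed

lemma bij_betw_reversed_block_positions:
  "bij_betw (\<lambda>(j, m). block_start (rev ps) (length ps - 1 - j) + m)
     {(j, m). j < length ps \<and> m \<le> length (ps ! j)} {..<\<Sum>q\<leftarrow>ps. Suc (length q)}"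
proof -
  have "bij_betw (\<lambda>(j, m). (length ps - 1 - j, m)) {(j, m). j < length ps \<and> m \<le> length (ps ! j)}
      {(j, m). j < length (rev ps) \<and> m \<le> length (rev ps ! j)}"
    by (rule bij_betw_byWitness[where f' = "\<lambda>(j, m). (length ps - 1 - j, m)"]) (auto simp: rev_nth)
  from bij_betw_trans[OF this bij_betw_block_positions[of "rev ps"]] show ?thesis
    by (simp add: comp_def case_prod_unfold rev_map[symmetric])
qed

lemma inj_on_Suc_add_mod: "inj_on (\<lambda>y. (Suc y + r) mod Suc n) {..<n}"
proof (rule inj_onI)
  fix y y' assume "y \<in> {..<n}" "y' \<in> {..<n}" "(Suc y + r) mod Suc n = (Suc y' + r) mod Suc n"
  then show "y = y'"
    using mod_add_right_cancel_less[of "Suc y" r "Suc n" "Suc y'"] by simp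
qed

lemma special_factorization_predecessor:
  assumes sf: "special_factorization w ps" and W: "bigW w ps = rotate r w"
  obtains pre where
    "\<And>v. 0 < v \<Longrightarrow> v < length w \<Longrightarrow> pre v < length w \<and> rotate (pre v) w < rotate v w \<and>
       last (rotate v w) \<le> last (rotate (pre v) w)"
    and "inj_on pre {0<..<length w}"
proof -
  define S where "S = (\<Sum>q\<leftarrow>ps. Suc (length q))"
  define I where "I = {(j, m). j < length ps \<and> m \<le> length (ps ! j)}"
  define pos where "pos = (\<lambda>(j, m). block_start ps j + m)"
  define pos' where "pos' = (\<lambda>(j, m). block_start (rev ps) (length ps - 1 - j) + m)"
  define idx where "idx v = inv_into I pos (v - 1)" for v
  define pre where "pre v = (Suc (pos' (idx v)) + r) mod length w" for v
  have n: "length w = Suc S"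
    using length_interleave[OF special_factorization_imp_interleave(2)[OF sf]]
      special_factorization_imp_interleave(1)[OF sf] by (simp add: S_def)
  have bij: "bij_betw pos I {..<S}" "bij_betw pos' I {..<S}"
    using bij_betw_block_positions[of ps] bij_betw_reversed_block_positions[of ps]
    by (simp_all add: pos_def pos'_def I_def S_def)
  have "bij_betw (\<lambda>v. v - 1) {0<..<length w} {..<S}"
    by (rule bij_betw_byWitness[where f' = Suc]) (auto simp: n)
  then have bij_idx: "bij_betw (pos' \<circ> idx) {0<..<length w} {..<S}"
    using bij_betw_trans[OF bij_betw_trans[OF _ bij_betw_inv_into[OF bij(1)]] bij(2)]
    by (simp add: idx_def comp_def)
  have "inj_on ((\<lambda>y. (Suc y + r) mod length w) \<circ> (pos' \<circ> idx)) {0<..<length w}"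
    by (rule comp_inj_on) (use bij_idx inj_on_Suc_add_mod[of r S] n in \<open>simp_all add: bij_betw_def\<close>)
  moreover have "pre = (\<lambda>y. (Suc y + r) mod length w) \<circ> (pos' \<circ> idx)"
    by (simp add: pre_def fun_eq_iff)
  moreover have "pre v < length w \<and> rotate (pre v) w < rotate v w \<and>
      last (rotate v w) \<le> last (rotate (pre v) w)"
    if "0 < v" "v < length w" for v
  proof -
    have "idx v \<in> I" "Suc (pos (idx v)) = v"
      using that n bij_betw_inv_into_right[OF bij(1)] bij_betw_apply[OF bij_betw_inv_into[OF bij(1)]]
      by (auto simp: idx_def)
    then show ?thesis
      using rotate_bigW_block_less[OF sf W] n
      by (auto simp: pre_def pos_def pos'_def I_def split: prod.splits)
  qed
  ultimately show ?thesis
    using that[of pre] by simp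
qed

theorem conjugate_bigW_imp_perfectly_clustering_lyndon:
  assumes prim: "primitive w" and sf: "special_factorization w ps" and conj: "conjugate w (bigW w ps)"
  shows "perfectly_clustering w \<and> lyndon w"
proof -
  obtain x y where "w = x @ y" "bigW w ps = y @ x"
    using conj unfolding conjugate_def by blast
  then have "bigW w ps = rotate (length x) w" by (simp add: rotate_append)
  then obtain pre where pre:
    "\<And>v. 0 < v \<Longrightarrow> v < length w \<Longrightarrow> pre v < length w \<and> rotate (pre v) w < rotate v w \<and>
       last (rotate v w) \<le> last (rotate (pre v) w)"
    and pre_inj: "inj_on pre {0<..<length w}"
    using special_factorization_predecessor[OF sf] by blast
  interpret injective_predecessor "length w" "\<lambda>t. rotate t w" "\<lambda>t. last (rotate t w)" pre
    using primitive_inj_on_rotate[OF prim] pre pre_inj by unfold_locales auto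
  have "w < rotate i w" if "0 < i" "i < length w" for i
    using key_0_least[of i] primitive_rotate_neq_self[OF prim that] that
    by (simp add: order.not_eq_order_implies_strict)
  then have "lyndon w"
    using prim unfolding lyndon_def by blast
  moreover have "perfectly_clustering w"
    using lab_antimono prim unfolding perfectly_clustering_iff by blast
  ultimately show ?thesis by simp
qed

section \<open>Letter counts\<close>

definition count_less :: "'a::linorder list \<Rightarrow> 'a \<Rightarrow> nat" where
  "count_less w c = card {u. u < length w \<and> w ! u < c}"

definition count_le :: "'a::linorder list \<Rightarrow> 'a \<Rightarrow> nat" where
  "count_le w c = card {u. u < length w \<and> w ! u \<le> c}"

lemma count_le_le_length: "count_le w c \<le> length w"
  unfolding count_le_def by (rule card_mono[of "{..<length w}", simplified]) auto

lemma count_less_less_count_le: "c \<in> set w \<Longrightarrow> count_less w c < count_le w c"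
  unfolding count_less_def count_le_def
  by (rule psubset_card_mono) (auto simp: in_set_conv_nth)

lemma count_le_le_count_less: "c < d \<Longrightarrow> count_le w c \<le> count_less w d"
  unfolding count_less_def count_le_def by (rule card_mono) auto

lemma count_block_unique:
  fixes c d :: "'a::linorder"
  assumes "count_less w c \<le> x" "x < count_le w c" "count_less w d \<le> x" "x < count_le w d"
  shows "c = d"
  using assms count_le_le_count_less[of c d w] count_le_le_count_less[of d c w]
  by (cases c d rule: linorder_cases) auto

lemma count_less_first_letter: "count_less w (letters w ! 0) = 0"
proof -
  have "\<not> w ! u < letters w ! 0" if u: "u < length w" for u
  proof
    assume less: "w ! u < letters w ! 0"
    obtain i where "i < card (set w)" "letters w ! i = w ! u"
      using letters_index nth_mem[OF u] by blast
    then show False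
      using less letters_nth_less[of 0 i w] by (cases i) auto
  qed
  then show ?thesis unfolding count_less_def by auto
qed

lemma count_le_last_letter:
  assumes "w \<noteq> []"
  shows "count_le w (letters w ! (card (set w) - 1)) = length w"
proof -
  have "w ! u \<le> letters w ! (card (set w) - 1)" if u: "u < length w" for u
  proof -
    obtain i where "i < card (set w)" "letters w ! i = w ! u"
      using letters_index nth_mem[OF u] by blast
    then show ?thesis
      using letters_nth_less[of i "card (set w) - 1" w]
      by (cases "i = card (set w) - 1") (auto intro: less_imp_le)
  qed
  then have "{u. u < length w \<and> w ! u \<le> letters w ! (card (set w) - 1)} = {..<length w}"
    by auto
  then show ?thesis unfolding count_le_def by simp
qed

lemma count_le_letter_eq_count_less_next:
  assumes "Suc i < card (set w)"
  shows "count_le w (letters w ! i) = count_less w (letters w ! Suc i)"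
proof -
  have "w ! u \<le> letters w ! i \<longleftrightarrow> w ! u < letters w ! Suc i" if u: "u < length w" for u
  proof -
    obtain j where j: "j < card (set w)" "letters w ! j = w ! u"
      using letters_index nth_mem[OF u] by blast
    show ?thesis
      using letters_nth_less[of j i w] letters_nth_less[of i j w]
        letters_nth_less[of j "Suc i" w] letters_nth_less[of "Suc i" j w]
        j assms by (cases j i rule: linorder_cases; cases j "Suc i" rule: linorder_cases) auto
  qed
  then have "{u. u < length w \<and> w ! u \<le> letters w ! i} = {u. u < length w \<and> w ! u < letters w ! Suc i}"
    by blast
  then show ?thesis unfolding count_le_def count_less_def by simp
qed

lemma count_less_letter_inj:
  assumes "i < card (set w)" "j < card (set w)"
    and "count_less w (letters w ! i) = count_less w (letters w ! j)"
  shows "i = j"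
proof -
  have "letters w ! i \<in> set w" "letters w ! j \<in> set w"
    using letters_nth_in_set assms(1,2) by blast+
  then have "count_less w (letters w ! i) < count_le w (letters w ! i)"
    "count_less w (letters w ! j) < count_le w (letters w ! j)"
    using count_less_less_count_le by blast+
  then have "letters w ! i = letters w ! j"
    using count_block_unique[of w "letters w ! i" "count_less w (letters w ! i)" "letters w ! j"] assms(3)
    by simp
  then show ?thesis
    using assms(1,2) letters_nth_eq_iff by blast
qed

lemma card_rotate_less_split:
  assumes "t < length w"
  shows "card {u. u < length w \<and> rotate u w < rotate t w}
       = count_less w (w ! t) + card {u. u < length w \<and> w ! u = w ! t \<and> rotate u w < rotate t w}"
proof -
  let ?A = "{u. u < length w \<and> w ! u < w ! t}"
  let ?B = "{u. u < length w \<and> w ! u = w ! t \<and> rotate u w < rotate t w}"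
  have "rotate u w < rotate t w \<longleftrightarrow> w ! u < w ! t \<or> w ! u = w ! t \<and> rotate u w < rotate t w"
    if "u < length w" for u
    using rotate_less_rotate_if_nth_less[OF that assms] nth_le_nth_if_rotate_less[OF that assms]
    by (metis order.order_iff_strict)
  then have "{u. u < length w \<and> rotate u w < rotate t w} = ?A \<union> ?B"
    by blast
  moreover have "?A \<inter> ?B = {}" by auto
  ultimately show ?thesis
    unfolding count_less_def by (simp add: card_Un_disjoint)
qed

section \<open>Palindromes\<close>

lemma palindromes_if_reflection:
  assumes "e < length w" and refl: "\<And>i. i < length w \<Longrightarrow> w ! ((e + length w - i) mod length w) = w ! i"
  shows "\<exists>x y. w = x @ y \<and> palindrome x \<and> palindrome y"
proof (intro exI conjI)
  show "w = take (Suc e) w @ drop (Suc e) w" by simp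
  show "palindrome (take (Suc e) w)"
    unfolding palindrome_def
  proof (rule nth_equalityI)
    fix i assume "i < length (rev (take (Suc e) w))"
    then have i: "i \<le> e" using assms(1) by simp
    then have "(e + length w - (e - i)) mod length w = i"
      using assms(1) by (simp add: le_imp_diff_is_add mod_add_self2)
    then show "rev (take (Suc e) w) ! i = take (Suc e) w ! i"
      using refl[of "e - i"] i assms(1) by (simp add: rev_nth)
  qed simp
  show "palindrome (drop (Suc e) w)"
    unfolding palindrome_def
  proof (rule nth_equalityI)
    fix i assume "i < length (rev (drop (Suc e) w))"
    then have i: "Suc e + i < length w" by simp
    then have "(e + length w - (length w - 1 - i)) mod length w = Suc e + i"
      by simp
    then have "w ! (length w - 1 - i) = w ! (Suc e + i)"
      using refl[of "length w - 1 - i"] i by simp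
    moreover have "Suc e + (length w - Suc e - Suc i) = length w - 1 - i"
      using i by simp
    ultimately show "rev (drop (Suc e) w) ! i = drop (Suc e) w ! i"
      using i by (simp add: rev_nth)
  qed simp
qed

lemma involution_fixpoint_if_odd_card:
  assumes "finite A" "\<And>a. a \<in> A \<Longrightarrow> f a \<in> A" "\<And>a. a \<in> A \<Longrightarrow> f (f a) = a" "odd (card A)"
  shows "\<exists>a\<in>A. f a = a"
  using assms
proof (induction "card A" arbitrary: A rule: less_induct)
  case less
  show ?case
  proof (rule ccontr)
    assume no_fix: "\<not> (\<exists>a\<in>A. f a = a)"
    obtain a where a: "a \<in> A"
      using less.prems(4) by fastforce
    then have fa: "f a \<in> A" "f a \<noteq> a"
      using less.prems(2) no_fix by auto
    let ?B = "A - {a, f a}"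
    have "2 \<le> card A"
      using a fa less.prems(1) card_mono[of A "{a, f a}"] by simp
    then have "card ?B < card A" "odd (card ?B)"
      using a fa less.prems(1,4) by (simp_all add: card_Diff_subset)
    moreover have "f b \<in> ?B" if "b \<in> ?B" for b
    proof -
      have "b \<in> A" "b \<noteq> a" "b \<noteq> f a"
        using that by auto
      moreover have "f (f b) = b" "f (f a) = a"
        using \<open>b \<in> A\<close> a less.prems(3) by auto
      ultimately show ?thesis
        using less.prems(2) by (metis Diff_iff insertE singletonD)
    qed
    ultimately obtain b where "b \<in> ?B" "f b = b"
      using less.hyps[of ?B] less.prems(1,3) by blast
    then show False
      using no_fix by blast
  qed
qed

lemma palindrome_odd_count:
  assumes "palindrome p" "odd (count_list p c)"
  shows "c = p ! (length p div 2)"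
proof -
  define A where "A = {i. i < length p \<and> p ! i = c}"
  have "odd (card A)"
    using assms(2) unfolding A_def count_list_eq_length_filter length_filter_conv_card
    by (simp add: eq_commute)
  moreover have "length p - 1 - i \<in> A" if "i \<in> A" for i
  proof -
    have "p ! (length p - Suc i) = p ! i"
      using assms(1) rev_nth[of i p] that by (simp add: A_def palindrome_def)
    then show ?thesis
      using that by (auto simp: A_def)
  qed
  moreover have "length p - 1 - (length p - 1 - i) = i" if "i \<in> A" for i
    using that by (simp add: A_def)
  moreover have "finite A"
    by (simp add: A_def)
  ultimately obtain i where "i \<in> A" "length p - 1 - i = i"
    using involution_fixpoint_if_odd_card[of A "\<lambda>i. length p - 1 - i"] by blast
  moreover from this have "i = length p div 2"
    by (simp add: A_def)
  ultimately show ?thesis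
    by (simp add: A_def)
qed

lemma card_odd_count_letters_le_2:
  assumes "w = x @ y" "palindrome x" "palindrome y"
  shows "card {c \<in> set w. odd (count_list w c)} \<le> 2"
proof -
  have "{c \<in> set w. odd (count_list w c)} \<subseteq> {x ! (length x div 2), y ! (length y div 2)}"
    using assms palindrome_odd_count by fastforce
  then have "card {c \<in> set w. odd (count_list w c)} \<le> card {x ! (length x div 2), y ! (length y div 2)}"
    by (rule card_mono[rotated]) simp
  also have "\<dots> \<le> 2"
    by (simp add: card_insert_le_m1)
  finally show ?thesis .
qed

section \<open>Perfectly clustering Lyndon words\<close>

locale perfectly_clustering_lyndon =
  fixes w :: "'a::linorder list"
  assumes perfectly_clustering: "perfectly_clustering w" and lyndon: "lyndon w"
begin

abbreviation lo :: "'a \<Rightarrow> nat" where "lo \<equiv> count_less w"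

abbreviation hi :: "'a \<Rightarrow> nat" where "hi \<equiv> count_le w"

definition rank :: "nat \<Rightarrow> nat" where
  "rank t = card {u. u < length w \<and> rotate u w < rotate t w}"

definition letter :: "nat \<Rightarrow> 'a" where
  "letter t = w ! (t mod length w)"

lemma primitive: "primitive w"
  using lyndon by (simp add: lyndon_def)

lemma length_pos: "0 < length w"
  using primitive by (simp add: primitive_def)

lemma card_set_pos: "0 < card (set w)"
  using length_pos by (simp add: card_gt_0_iff)

lemma clustering: "rotate x w < rotate y w \<Longrightarrow> last (rotate y w) \<le> last (rotate x w)"
  using perfectly_clustering unfolding perfectly_clustering_iff
  by (metis length_pos mod_less_divisor rotate_conv_mod)

lemma rank_mod [simp]: "rank (t mod length w) = rank t"
  by (simp add: rank_def flip: rotate_conv_mod)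

lemma rank_add_length [simp]: "rank (t + length w) = rank t"
  by (metis rank_mod mod_add_self2)

lemma letter_add_length [simp]: "letter (t + length w) = letter t"
  by (simp add: letter_def)

lemma letter_in_set: "letter t \<in> set w"
  using length_pos by (simp add: letter_def)

lemma letter_eq_nth: "t < length w \<Longrightarrow> letter t = w ! t"
  by (simp add: letter_def)

lemma rank_less_length: "rank t < length w"
proof -
  have "{u. u < length w \<and> rotate u w < rotate t w} \<subseteq> {..<length w} - {t mod length w}"
    using rotate_conv_mod[of t w] by auto
  then have "rank t \<le> card ({..<length w} - {t mod length w})"
    unfolding rank_def by (rule card_mono[rotated]) simp
  moreover have "card ({..<length w} - {t mod length w}) = length w - 1"
    using length_pos by simp
  ultimately show ?thesis
    using length_pos by linarith
qed

lemma rank_less_rank_if_rotate_less: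
  assumes "rotate a w < rotate b w"
  shows "rank a < rank b"
proof -
  have "{u. u < length w \<and> rotate u w < rotate a w} \<subset> {u. u < length w \<and> rotate u w < rotate b w}"
  proof
    show "{u. u < length w \<and> rotate u w < rotate a w} \<subseteq> {u. u < length w \<and> rotate u w < rotate b w}"
      using assms by auto
    have "a mod length w \<in> {u. u < length w \<and> rotate u w < rotate b w}"
      using assms length_pos rotate_conv_mod[of a w] by simp
    moreover have "a mod length w \<notin> {u. u < length w \<and> rotate u w < rotate a w}"
      using rotate_conv_mod[of a w] by simp
    ultimately show "{u. u < length w \<and> rotate u w < rotate a w}
        \<noteq> {u. u < length w \<and> rotate u w < rotate b w}"
      by blast
  qed
  then show ?thesis
    unfolding rank_def by (rule psubset_card_mono[rotated]) simp
qed

lemma rank_eq_rank_iff: "rank a = rank b \<longleftrightarrow> a mod length w = b mod length w"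
proof
  assume "rank a = rank b"
  then have "rotate (a mod length w) w = rotate (b mod length w) w"
    using rank_less_rank_if_rotate_less[of a b] rank_less_rank_if_rotate_less[of b a]
    by (metis neq_iff less_irrefl rotate_conv_mod)
  then show "a mod length w = b mod length w"
    using inj_onD[OF primitive_inj_on_rotate[OF primitive]] length_pos by simp
qed (metis rank_mod)

lemma rank_surj: "x < length w \<Longrightarrow> \<exists>t<length w. rank t = x"
proof -
  have "inj_on rank {..<length w}"
    by (intro inj_onI) (simp add: rank_eq_rank_iff)
  moreover have "rank ` {..<length w} \<subseteq> {..<length w}"
    using rank_less_length by auto
  ultimately have "rank ` {..<length w} = {..<length w}"
    by (simp add: endo_inj_surj)
  then show "x < length w \<Longrightarrow> \<exists>t<length w. rank t = x"
    by (metis imageE lessThan_iff)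
qed

lemma rank_0 [simp]: "rank 0 = 0"
proof -
  have "\<not> rotate u w < w" if "u < length w" for u
    using lyndon that unfolding lyndon_def by (cases "u = 0") (auto dest: less_not_sym)
  then show ?thesis by (simp add: rank_def)
qed

lemma rank_bounds: "lo (letter t) \<le> rank t" "rank t < hi (letter t)"
proof -
  define s where "s = t mod length w"
  have s: "s < length w" "rank t = card {u. u < length w \<and> rotate u w < rotate s w}" "letter t = w ! s"
    using length_pos by (simp_all add: s_def rank_def letter_def flip: rotate_conv_mod)
  show "lo (letter t) \<le> rank t"
    using s card_rotate_less_split[OF s(1)] by simp
  have "{u. u < length w \<and> rotate u w < rotate s w} \<subset> {u. u < length w \<and> w ! u \<le> w ! s}"
    using s(1) nth_le_nth_if_rotate_less by auto
  then show "rank t < hi (letter t)"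
    unfolding count_le_def s by (rule psubset_card_mono[rotated]) simp
qed

lemma letter_eq_if_rank_in_block: "lo c \<le> rank t \<Longrightarrow> rank t < hi c \<Longrightarrow> letter t = c"
  using count_block_unique rank_bounds by metis

lemma rotate_Suc_less_iff:
  assumes "u < length w" "t < length w"
  shows "rotate (Suc u) w < rotate (Suc t) w \<longleftrightarrow> w ! t < w ! u \<or> w ! u = w ! t \<and> rotate u w < rotate t w"
proof (cases "w ! u = w ! t")
  case True
  then show ?thesis using rotate_Suc_less_iff_same_nth[OF assms] by simp
next
  case False
  have last: "last (rotate (Suc u) w) = w ! u" "last (rotate (Suc t) w) = w ! t"
    using assms by (simp_all add: last_rotate_Suc)
  have "rotate (Suc u) w < rotate (Suc t) w \<longleftrightarrow> w ! t < w ! u"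
  proof
    assume "rotate (Suc u) w < rotate (Suc t) w"
    then show "w ! t < w ! u"
      using clustering last False by fastforce
  next
    assume less: "w ! t < w ! u"
    then have "rotate (Suc u) w \<noteq> rotate (Suc t) w" "\<not> rotate (Suc t) w < rotate (Suc u) w"
      using clustering[of "Suc t" "Suc u"] last by auto
    then show "rotate (Suc u) w < rotate (Suc t) w" by simp
  qed
  then show ?thesis using False by simp
qed

text \<open>The LF-mapping: perfect clustering places the rotations ending with c at the ranks
  length w - hi c, ..., length w - lo c - 1, in the same order as the rotations starting
  with c that precede them.\<close>

lemma rank_Suc: "rank (Suc t) + lo (letter t) + hi (letter t) = rank t + length w"
proof -
  define s where "s = t mod length w"
  define c where "c = w ! s"
  have s: "s < length w" "rank s = rank t" "letter t = c"
    using length_pos by (simp_all add: s_def c_def letter_def)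
  have "rank (Suc s) = rank (Suc t)"
    by (metis rank_mod mod_Suc_eq s_def)
  have "rank (Suc s) = card {u. u < length w \<and> rotate (Suc u) w < rotate (Suc s) w}"
    unfolding rank_def using card_rotate_Suc[where P = "\<lambda>x. x < rotate (Suc s) w"] by simp
  also have "\<dots> = card ({u. u < length w \<and> c < w ! u} \<union>
      {u. u < length w \<and> w ! u = c \<and> rotate u w < rotate s w})"
    using rotate_Suc_less_iff[OF _ s(1)] by (intro arg_cong[where f = card]) (auto simp: c_def)
  also have "\<dots> = card {u. u < length w \<and> c < w ! u} + (rank s - lo c)"
    using card_rotate_less_split[OF s(1)] by (subst card_Un_disjoint) (auto simp: rank_def c_def)
  also have "card {u. u < length w \<and> c < w ! u} = length w - hi c"
  proof -
    have "{..<length w} = {u. u < length w \<and> c < w ! u} \<union> {u. u < length w \<and> w ! u \<le> c}"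
      by auto
    then have "length w = card ({u. u < length w \<and> c < w ! u} \<union> {u. u < length w \<and> w ! u \<le> c})"
      using card_lessThan[of "length w"] by simp
    also have "\<dots> = card {u. u < length w \<and> c < w ! u} + hi c"
      unfolding count_le_def by (rule card_Un_disjoint) auto
    finally show ?thesis by simp
  qed
  finally show ?thesis
    using s \<open>rank (Suc s) = rank (Suc t)\<close> rank_bounds[of t] count_le_le_length[of w c] by simp
qed

lemma rank_Suc_eq_rank_Suc_iff: "rank (Suc a) = rank (Suc b) \<longleftrightarrow> rank a = rank b"
proof
  assume "rank (Suc a) = rank (Suc b)"
  then have "(a mod length w + 1) mod length w = (b mod length w + 1) mod length w"
    by (simp add: rank_eq_rank_iff mod_Suc_eq)
  then show "rank a = rank b"
    using mod_add_right_cancel_less[of "a mod length w" 1 "length w" "b mod length w"] length_pos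
    by (simp add: rank_eq_rank_iff)
next
  assume "rank a = rank b"
  then show "rank (Suc a) = rank (Suc b)"
    by (simp add: rank_eq_rank_iff) (metis mod_Suc_eq)
qed

lemma letter_0: "letter 0 = letters w ! 0"
proof -
  have "lo (letters w ! 0) < hi (letters w ! 0)"
    using count_less_less_count_le letters_nth_in_set card_set_pos by blast
  then show ?thesis
    using count_less_first_letter[of w] by (intro letter_eq_if_rank_in_block) simp_all
qed

text \<open>mirrored a t: the rank of a is the reflection of the rank of t inside the block
  of ranks lo c, ..., hi c - 1 of the rotations starting with c = letter t.\<close>

definition mirrored :: "nat \<Rightarrow> nat \<Rightarrow> bool" where
  "mirrored a t \<longleftrightarrow> rank a + rank t + 1 = lo (letter t) + hi (letter t)"

lemma letter_eq_if_mirrored: "mirrored a t \<Longrightarrow> letter a = letter t"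
  unfolding mirrored_def using rank_bounds[of t]
  by (intro letter_eq_if_rank_in_block) linarith+

lemma ex_mirrored: "\<exists>b. mirrored b t"
proof -
  have "lo (letter t) + hi (letter t) - 1 - rank t < length w"
    using rank_bounds[of t] count_le_le_length[of w "letter t"] by linarith
  then obtain b where "rank b = lo (letter t) + hi (letter t) - 1 - rank t"
    using rank_surj by blast
  then show ?thesis
    unfolding mirrored_def using rank_bounds[of t] by (intro exI[of _ b]) linarith
qed

text \<open>The successor map on ranks is conjugate to its inverse by the reflections.\<close>

lemma mirrored_Suc: "mirrored (Suc a) t \<Longrightarrow> mirrored a (Suc t)"
proof -
  assume mir: "mirrored (Suc a) t"
  obtain b where b: "mirrored b (Suc t)"
    using ex_mirrored by blast
  then have "rank (Suc b) + lo (letter (Suc t)) + hi (letter (Suc t)) = rank b + length w"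
    using rank_Suc[of b] letter_eq_if_mirrored by simp
  then have "rank (Suc b) = rank (Suc a)"
    using rank_Suc[of t] mir b unfolding mirrored_def by linarith
  then have "rank a = rank b"
    by (simp add: rank_Suc_eq_rank_Suc_iff)
  then show "mirrored a (Suc t)"
    using b by (simp add: mirrored_def)
qed

lemma product_of_two_palindromes: "\<exists>x y. w = x @ y \<and> palindrome x \<and> palindrome y"
proof -
  have first: "0 < hi (letters w ! 0)"
    using count_less_less_count_le letters_nth_in_set card_set_pos by fastforce
  then have "hi (letters w ! 0) - 1 < length w"
    using count_le_le_length[of w "letters w ! 0"] by linarith
  then obtain e where e: "e < length w" "rank e = hi (letters w ! 0) - 1"
    using rank_surj by blast
  have "mirrored (e + length w - t) t" if "t \<le> e + length w" for t
    using that
  proof (induction t)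
    case 0
    then show ?case using e first by (simp add: mirrored_def letter_0 count_less_first_letter)
  next
    case (Suc t)
    then have "mirrored (Suc (e + length w - Suc t)) t"
      by (simp add: Suc_diff_Suc)
    then show ?case by (rule mirrored_Suc)
  qed
  then have "letter (e + length w - i) = letter i" if "i < length w" for i
    using that letter_eq_if_mirrored by simp
  then show ?thesis
    using e(1) by (intro palindromes_if_reflection) (simp_all add: letter_def)
qed

section \<open>Markers and gaps\<close>

text \<open>The rotation at a marker t is the least rotation starting with letter t, and marker i
  is the marker of a_i. The markers turn out to be the positions of a_1, ..., a_k in the
  palindromic special factorization, and the gaps between them its factors pi_i.\<close>

definition is_marker :: "nat \<Rightarrow> bool" where
  "is_marker t \<longleftrightarrow> rank t = lo (letter t)"

definition marker :: "nat \<Rightarrow> nat" where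
  "marker i = (SOME t. t < length w \<and> rank t = lo (letters w ! i))"

lemma marker: "i < card (set w) \<Longrightarrow> marker i < length w \<and> rank (marker i) = lo (letters w ! i)"
proof -
  assume "i < card (set w)"
  then have "lo (letters w ! i) < length w"
    using count_less_less_count_le letters_nth_in_set count_le_le_length order.strict_trans2 by metis
  then have "\<exists>t. t < length w \<and> rank t = lo (letters w ! i)"
    using rank_surj by blast
  then show ?thesis
    unfolding marker_def by (rule someI_ex)
qed

lemma letter_marker: "i < card (set w) \<Longrightarrow> letter (marker i) = letters w ! i"
  using marker count_less_less_count_le letters_nth_in_set
  by (metis letter_eq_if_rank_in_block order.refl)

lemma is_marker_marker: "i < card (set w) \<Longrightarrow> is_marker (marker i)"
  using marker letter_marker by (simp add: is_marker_def)

lemma marker_inj: "i < card (set w) \<Longrightarrow> j < card (set w) \<Longrightarrow> marker i = marker j \<Longrightarrow> i = j"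
  using marker count_less_letter_inj by (metis length_sorted_list_of_set)

lemma is_marker_mod: "is_marker (t mod length w) \<longleftrightarrow> is_marker t"
  by (simp add: is_marker_def letter_def)

lemma is_marker_add_length: "is_marker (t + length w) \<longleftrightarrow> is_marker t"
  by (simp add: is_marker_def)

lemma is_marker_imp_marker:
  assumes "is_marker t"
  obtains i where "i < card (set w)" "t mod length w = marker i" "letter t = letters w ! i"
proof -
  obtain i where i: "i < card (set w)" "letters w ! i = letter t"
    using letters_index[OF letter_in_set] by auto
  then have "rank t = rank (marker i)"
    using assms marker by (simp add: is_marker_def)
  then have "t mod length w = marker i"
    using marker[OF i(1)] rank_eq_rank_iff[of t "marker i"] by simp
  then show ?thesis using that i by simp
qed

lemma marker_0: "marker 0 = 0"
  using marker[OF card_set_pos] count_less_first_letter[of w] rank_eq_rank_iff[of 0 "marker 0"] by simp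

lemma is_marker_0: "is_marker 0"
  using is_marker_marker[OF card_set_pos] marker_0 by simp

lemma marker_last: "marker (card (set w) - 1) = length w - 1"
proof -
  let ?c = "letter (length w - 1)" and ?l = "letters w ! (card (set w) - 1)"
  have "rank (length w) = 0"
    using rank_add_length[of 0] by simp
  then have c: "hi ?c = length w" "rank (length w - 1) = lo ?c"
    using rank_Suc[of "length w - 1"] rank_bounds[of "length w - 1"] count_le_le_length[of w ?c] length_pos
    by (simp_all add: Suc_diff_1)
  have "?l \<in> set w"
    using letters_nth_in_set[of "card (set w) - 1" w] card_set_pos by simp
  then have l: "hi ?l = length w" "lo ?l < hi ?l"
    using count_le_last_letter[of w] length_pos count_less_less_count_le[of ?l w] by simp_all
  have "?c = ?l"
    using rank_less_length[of "length w - 1"] c l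
    by (intro count_block_unique[of w _ "length w - 1"]) simp_all
  then have "rank (length w - 1) = rank (marker (card (set w) - 1))"
    using c marker[of "card (set w) - 1"] card_set_pos by simp
  then show ?thesis
    using marker[of "card (set w) - 1"] card_set_pos length_pos rank_eq_rank_iff by simp
qed

lemma rank_Suc_marker: "i < card (set w) \<Longrightarrow> rank (Suc (marker i)) + hi (letters w ! i) = length w"
  using rank_Suc[of "marker i"] marker letter_marker by simp

lemma marker_less_last: "Suc i < card (set w) \<Longrightarrow> marker i < length w - 1"
  using marker_inj[of i "card (set w) - 1"] marker[of i] marker_last by fastforce

lemma marker_pos: "0 < i \<Longrightarrow> i < card (set w) \<Longrightarrow> 0 < marker i"
  using marker_inj[of i 0] marker_0 by (cases "marker i") auto

definition gap :: "nat \<Rightarrow> nat" where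
  "gap \<mu> = (LEAST m. is_marker (Suc (marker \<mu>) + m))"

lemma gap:
  assumes "Suc \<mu> < card (set w)"
  shows "Suc (marker \<mu>) + gap \<mu> < length w" "is_marker (Suc (marker \<mu>) + gap \<mu>)"
    and "m < gap \<mu> \<Longrightarrow> \<not> is_marker (Suc (marker \<mu>) + m)"
proof -
  define m0 where "m0 = length w - 1 - Suc (marker \<mu>)"
  have less: "marker \<mu> < length w - 1"
    using marker_less_last assms by simp
  then have "Suc (marker \<mu>) + m0 = marker (card (set w) - 1)"
    using marker_last by (simp add: m0_def)
  then have "is_marker (Suc (marker \<mu>) + m0)"
    using is_marker_marker[of "card (set w) - 1"] assms by simp
  then show "is_marker (Suc (marker \<mu>) + gap \<mu>)"
    unfolding gap_def by (rule LeastI)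
  have "gap \<mu> \<le> m0"
    unfolding gap_def using \<open>is_marker (Suc (marker \<mu>) + m0)\<close> by (rule Least_le)
  then show "Suc (marker \<mu>) + gap \<mu> < length w"
    using less by (simp add: m0_def)
  show "m < gap \<mu> \<Longrightarrow> \<not> is_marker (Suc (marker \<mu>) + m)"
    unfolding gap_def by (rule not_less_Least)
qed

lemma rank_complement_step:
  assumes sum: "rank a + rank (Suc b) = length w" and "\<not> is_marker a"
  shows "rank (Suc a) + rank b = length w" "letter a = letter b"
proof -
  have "lo (letter a) < rank a"
    using assms(2) rank_bounds[of a] by (simp add: is_marker_def)
  moreover have "rank a - 1 < length w"
    using rank_less_length[of a] by simp
  ultimately obtain a0 where a0: "rank a0 + 1 = rank a"
    using rank_surj by (metis Suc_diff_1 Suc_eq_plus1 bot_nat_0.extremum_strict neq0_conv)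
  then have "letter a0 = letter a"
    using rank_bounds[of a] \<open>lo (letter a) < rank a\<close> by (intro letter_eq_if_rank_in_block) simp_all
  moreover have "mirrored a0 b"
    using rank_Suc[of b] sum a0 unfolding mirrored_def by linarith
  ultimately show "letter a = letter b"
    using letter_eq_if_mirrored by simp
  then have "rank (Suc a) + lo (letter b) + hi (letter b) = rank a + length w"
    using rank_Suc[of a] by simp
  then show "rank (Suc a) + rank b = length w"
    using \<open>mirrored a0 b\<close> a0 unfolding mirrored_def by linarith
qed

text \<open>At m = 0 the ranks are complementary because hi a_mu = lo a_(mu+1), and each step
  forward from marker mu and backward from marker (mu+1) preserves this as long as the forward
  position is no marker.\<close>

lemma rank_chain:
  assumes "Suc \<mu> < card (set w)" "m \<le> gap \<mu>"
  shows "rank (Suc (marker \<mu>) + m) + rank (marker (Suc \<mu>) + length w - m) = length w"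
  using assms(2)
proof (induction m)
  case 0
  have "rank (marker (Suc \<mu>) + length w) = lo (letters w ! Suc \<mu>)"
    using marker[OF assms(1)] by simp
  then show ?case
    using rank_Suc_marker[of \<mu>] count_le_letter_eq_count_less_next[of \<mu> w] assms(1) by simp
next
  case (Suc m)
  have "Suc (marker \<mu>) + m < length w"
    using gap(1)[OF assms(1)] Suc.prems by linarith
  then have "marker (Suc \<mu>) + length w - m = Suc (marker (Suc \<mu>) + length w - Suc m)"
    by simp
  then have "rank (Suc (marker \<mu>) + m) + rank (Suc (marker (Suc \<mu>) + length w - Suc m)) = length w"
    using Suc by simp
  then show ?case
    using rank_complement_step(1) gap(3)[OF assms(1), of m] Suc.prems by simp
qed

lemma letter_chain:
  assumes "Suc \<mu> < card (set w)" "m < gap \<mu>"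
  shows "letter (Suc (marker \<mu>) + m) = letter (marker (Suc \<mu>) + length w - Suc m)"
proof -
  have "Suc (marker \<mu>) + m < length w"
    using gap(1)[OF assms(1)] assms(2) by linarith
  then have "marker (Suc \<mu>) + length w - m = Suc (marker (Suc \<mu>) + length w - Suc m)"
    by simp
  then show ?thesis
    using rank_chain[OF assms(1), of m] assms(2) rank_complement_step(2) gap(3)[OF assms] by simp
qed

lemma mod_length_eq_marker_if_rank_Suc:
  assumes "i < card (set w)" "rank (Suc y) + hi (letters w ! i) = length w"
  shows "y mod length w = marker i"
proof -
  have "rank (Suc y) = rank (Suc (marker i))"
    using assms(2) rank_Suc_marker[OF assms(1)] by linarith
  then have "rank y = rank (marker i)"
    by (simp only: rank_Suc_eq_rank_Suc_iff)
  then show ?thesis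
    using marker[OF assms(1)] rank_eq_rank_iff[of y "marker i"] by simp
qed

definition next_marker :: "nat \<Rightarrow> nat" where
  "next_marker \<mu> = (SOME l. l < card (set w) \<and> marker l = Suc (marker \<mu>) + gap \<mu>)"

lemma next_marker:
  assumes "Suc \<mu> < card (set w)"
  shows "next_marker \<mu> < card (set w)" "marker (next_marker \<mu>) = Suc (marker \<mu>) + gap \<mu>"
proof -
  obtain l where "l < card (set w)" "(Suc (marker \<mu>) + gap \<mu>) mod length w = marker l"
    using is_marker_imp_marker gap(2)[OF assms] by metis
  then have "\<exists>l. l < card (set w) \<and> marker l = Suc (marker \<mu>) + gap \<mu>"
    using gap(1)[OF assms] by auto
  then have "next_marker \<mu> < card (set w) \<and> marker (next_marker \<mu>) = Suc (marker \<mu>) + gap \<mu>"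
    unfolding next_marker_def by (rule someI_ex)
  then show "next_marker \<mu> < card (set w)" "marker (next_marker \<mu>) = Suc (marker \<mu>) + gap \<mu>"
    by simp_all
qed

lemma next_marker_pos: "Suc \<mu> < card (set w) \<Longrightarrow> 0 < next_marker \<mu>"
  using next_marker(2) marker_0 by (metis neq0_conv Suc_neq_Zero add_Suc)

lemma rank_chain_end:
  assumes "Suc \<mu> < card (set w)"
  shows "rank (marker (Suc \<mu>) + length w - gap \<mu>) + hi (letters w ! (next_marker \<mu> - 1)) = length w"
proof -
  let ?l = "next_marker \<mu>"
  have "rank (marker ?l) = hi (letters w ! (?l - 1))"
    using marker[OF next_marker(1)[OF assms]] count_le_letter_eq_count_less_next[of "?l - 1" w]
      next_marker_pos[OF assms] next_marker(1)[OF assms] by simp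
  then show ?thesis
    using rank_chain[OF assms order.refl] next_marker(2)[OF assms] by simp
qed

text \<open>By the complementary ranks, a marker m positions before marker (mu+1) would force
  one m - 1 positions after marker mu.\<close>

lemma no_marker_before_marker_Suc:
  assumes "Suc \<mu> < card (set w)" "0 < m" "m \<le> gap \<mu>" "m \<le> marker (Suc \<mu>)"
  shows "\<not> is_marker (marker (Suc \<mu>) - m)"
proof
  assume "is_marker (marker (Suc \<mu>) - m)"
  then have "is_marker (marker (Suc \<mu>) + length w - m)"
    using assms(4) is_marker_add_length[of "marker (Suc \<mu>) - m"] by simp
  then obtain q where q: "q < card (set w)" "rank (marker (Suc \<mu>) + length w - m) = lo (letters w ! q)"
    by (metis is_marker_imp_marker marker rank_mod)
  have sum: "rank (Suc (marker \<mu>) + m) + lo (letters w ! q) = length w"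
    using rank_chain[OF assms(1,3)] q(2) by simp
  have "q \<noteq> 0"
  proof
    assume "q = 0"
    then show False
      using sum rank_less_length[of "Suc (marker \<mu>) + m"] count_less_first_letter[of w] by simp
  qed
  then have "rank (Suc (marker \<mu> + m)) + hi (letters w ! (q - 1)) = length w"
    using sum q(1) count_le_letter_eq_count_less_next[of "q - 1" w] by simp
  then have "is_marker (Suc (marker \<mu>) + (m - 1))"
    using mod_length_eq_marker_if_rank_Suc[of "q - 1" "marker \<mu> + m"] q(1) assms(2)
      is_marker_marker[of "q - 1"] is_marker_mod[of "marker \<mu> + m"] by simp
  moreover have "m - 1 < gap \<mu>"
    using assms(2,3) by linarith
  ultimately show False
    using gap(3)[OF assms(1)] by blast
qed

lemma gap_less_marker_Suc:
  assumes "Suc \<mu> < card (set w)"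
  shows "gap \<mu> < marker (Suc \<mu>)"
proof (rule ccontr)
  assume "\<not> gap \<mu> < marker (Suc \<mu>)"
  then have "\<not> is_marker 0"
    using no_marker_before_marker_Suc[OF assms, of "marker (Suc \<mu>)"] marker_pos[OF _ assms] by simp
  then show False
    using is_marker_0 by simp
qed

lemma marker_before_marker_Suc:
  assumes "Suc \<mu> < card (set w)"
  shows "marker (next_marker \<mu> - 1) = marker (Suc \<mu>) - Suc (gap \<mu>)"
proof -
  let ?y = "marker (Suc \<mu>) - Suc (gap \<mu>)"
  have "marker (Suc \<mu>) + length w - gap \<mu> = Suc ?y + length w"
    using gap_less_marker_Suc[OF assms] by simp
  then have "rank (marker (Suc \<mu>) + length w - gap \<mu>) = rank (Suc ?y)"
    by (simp only: rank_add_length)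
  then have "rank (Suc ?y) + hi (letters w ! (next_marker \<mu> - 1)) = length w"
    using rank_chain_end[OF assms] by simp
  then have "?y mod length w = marker (next_marker \<mu> - 1)"
    using next_marker(1)[OF assms] by (intro mod_length_eq_marker_if_rank_Suc) simp_all
  moreover have "?y < length w"
    using marker[OF assms] by (simp add: less_imp_diff_less)
  ultimately show ?thesis by simp
qed

lemma letter_mirror_in_gap:
  assumes "Suc \<mu> < card (set w)" "m < gap \<mu>"
  shows "letter (Suc (marker \<mu>) + m) = letter (marker (Suc \<mu>) - Suc m)"
proof -
  have "marker (Suc \<mu>) + length w - Suc m = (marker (Suc \<mu>) - Suc m) + length w"
    using gap_less_marker_Suc[OF assms(1)] assms(2) by simp
  then show ?thesis
    using letter_chain[OF assms] by simp
qed

text \<open>The gap after marker mu is the mirror image of the gap ending at marker (mu+1)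
  (letter_mirror_in_gap), which starts at marker (next_marker mu - 1); this pairing of gaps
  is an involution.\<close>

lemma gap_next_marker_pred:
  assumes "Suc \<mu> < card (set w)"
  shows "Suc (next_marker \<mu> - 1) < card (set w)" "gap (next_marker \<mu> - 1) = gap \<mu>"
    and "next_marker (next_marker \<mu> - 1) = Suc \<mu>"
proof -
  let ?\<nu> = "next_marker \<mu> - 1" and ?T = "marker (Suc \<mu>)"
  show nu: "Suc ?\<nu> < card (set w)"
    using next_marker(1)[OF assms] next_marker_pos[OF assms] by simp
  have T: "Suc (marker ?\<nu>) + gap \<mu> = ?T" "gap \<mu> < ?T"
    using marker_before_marker_Suc[OF assms] gap_less_marker_Suc[OF assms] by simp_all
  show gap_eq: "gap ?\<nu> = gap \<mu>"
    unfolding gap_def[of ?\<nu>]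
  proof (rule Least_equality)
    show "is_marker (Suc (marker ?\<nu>) + gap \<mu>)"
      using T is_marker_marker assms by simp
    fix m assume m: "is_marker (Suc (marker ?\<nu>) + m)"
    show "gap \<mu> \<le> m"
    proof (rule ccontr)
      assume "\<not> gap \<mu> \<le> m"
      then have "Suc (marker ?\<nu>) + m = ?T - (gap \<mu> - m)" "0 < gap \<mu> - m" "gap \<mu> - m \<le> ?T"
        using T by auto
      then show False
        using no_marker_before_marker_Suc[OF assms, of "gap \<mu> - m"] m by simp
    qed
  qed
  have "marker (next_marker ?\<nu>) = marker (Suc \<mu>)"
    using next_marker(2)[OF nu] gap_eq T by simp
  then show "next_marker ?\<nu> = Suc \<mu>"
    using marker_inj next_marker(1)[OF nu] assms by blast
qed

definition in_gap :: "nat \<Rightarrow> nat \<Rightarrow> bool" where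
  "in_gap \<mu> t \<longleftrightarrow> Suc \<mu> < card (set w) \<and> marker \<mu> < t \<and> t \<le> marker \<mu> + gap \<mu>"

definition gap_of :: "nat \<Rightarrow> nat" where
  "gap_of t = (THE \<mu>. in_gap \<mu> t)"

definition mirror :: "nat \<Rightarrow> nat" where
  "mirror t = marker (gap_of t) + marker (Suc (gap_of t)) - t"

lemma in_gapD:
  assumes "in_gap \<mu> t"
  shows "t < length w" "\<not> is_marker t"
proof -
  have \<mu>: "Suc \<mu> < card (set w)" "marker \<mu> < t" "t \<le> marker \<mu> + gap \<mu>"
    using assms by (simp_all add: in_gap_def)
  then show "t < length w"
    using gap(1)[OF \<mu>(1)] by linarith
  have "t = Suc (marker \<mu>) + (t - Suc (marker \<mu>))" "t - Suc (marker \<mu>) < gap \<mu>"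
    using \<mu> by linarith+
  then show "\<not> is_marker t"
    using gap(3)[OF \<mu>(1)] by metis
qed

lemma ex_in_gap:
  assumes "t < length w" "\<not> is_marker t"
  shows "\<exists>\<mu>. in_gap \<mu> t"
proof -
  define M where "M = {i. i < card (set w) \<and> marker i < t}"
  have "t \<noteq> 0"
    using assms(2) is_marker_0 by metis
  then have "0 \<in> M"
    using card_set_pos marker_0 by (simp add: M_def)
  moreover have "finite M"
    by (simp add: M_def)
  ultimately have "Max (marker ` M) \<in> marker ` M"
    by (intro Max_in) auto
  then obtain \<mu> where \<mu>: "\<mu> \<in> M" "marker \<mu> = Max (marker ` M)"
    by (metis imageE)
  then have max: "marker i \<le> marker \<mu>" if "i \<in> M" for i
    using \<open>finite M\<close> that by simp
  have "t \<noteq> length w - 1"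
    using assms(2) is_marker_marker[of "card (set w) - 1"] marker_last card_set_pos by auto
  then have "\<mu> \<noteq> card (set w) - 1"
    using \<mu>(1) marker_last assms(1) by (auto simp: M_def)
  moreover have "\<mu> < card (set w)"
    using \<mu>(1) by (simp add: M_def)
  ultimately have suc: "Suc \<mu> < card (set w)"
    by linarith
  have "t \<le> marker \<mu> + gap \<mu>"
  proof (rule ccontr)
    assume "\<not> t \<le> marker \<mu> + gap \<mu>"
    moreover have "marker (next_marker \<mu>) \<noteq> t"
      using assms(2) is_marker_marker next_marker(1)[OF suc] by auto
    ultimately have "next_marker \<mu> \<in> M"
      using next_marker[OF suc] by (simp add: M_def)
    then show False
      using max next_marker(2)[OF suc] by fastforce
  qed
  then show ?thesis
    using suc \<mu>(1) by (auto simp: in_gap_def M_def)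
qed

lemma in_gap_unique:
  assumes "in_gap \<mu> t" "in_gap \<mu>' t"
  shows "\<mu> = \<mu>'"
proof (rule ccontr)
  assume "\<mu> \<noteq> \<mu>'"
  moreover have "\<not> marker a < marker b" if "in_gap a t" "in_gap b t" for a b
  proof
    assume less: "marker a < marker b"
    have "marker b = Suc (marker a) + (marker b - Suc (marker a))"
      "marker b - Suc (marker a) < gap a" "Suc a < card (set w)" "b < card (set w)"
      using that less by (auto simp: in_gap_def)
    then show False
      using gap(3) is_marker_marker by metis
  qed
  ultimately show False
    using assms marker_inj by (metis in_gap_def Suc_lessD linorder_neqE_nat)
qed

lemma gap_of_eq: "in_gap \<mu> t \<Longrightarrow> gap_of t = \<mu>"
  unfolding gap_of_def using in_gap_unique by blast

lemma mirror_eq: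
  assumes "in_gap \<mu> t"
  shows "mirror t = marker (Suc \<mu>) - Suc (t - Suc (marker \<mu>))"
proof -
  have "marker \<mu> < t" "t \<le> marker \<mu> + gap \<mu>" "gap \<mu> < marker (Suc \<mu>)"
    using assms gap_less_marker_Suc by (simp_all add: in_gap_def)
  then show ?thesis
    using gap_of_eq[OF assms] by (simp add: mirror_def)
qed

lemma mirror_in_gap:
  assumes "in_gap \<mu> t"
  shows "in_gap (next_marker \<mu> - 1) (mirror t)"
proof -
  have \<mu>: "Suc \<mu> < card (set w)" "marker \<mu> < t" "t \<le> marker \<mu> + gap \<mu>"
    using assms by (simp_all add: in_gap_def)
  then show ?thesis
    using mirror_eq[OF assms] gap_next_marker_pred[OF \<mu>(1)] marker_before_marker_Suc[OF \<mu>(1)]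
      gap_less_marker_Suc[OF \<mu>(1)] unfolding in_gap_def by simp arith
qed

lemma letter_mirror:
  assumes "in_gap \<mu> t"
  shows "letter (mirror t) = letter t"
proof -
  have \<mu>: "Suc \<mu> < card (set w)" "t = Suc (marker \<mu>) + (t - Suc (marker \<mu>))"
    "t - Suc (marker \<mu>) < gap \<mu>"
    using assms by (auto simp: in_gap_def)
  then show ?thesis
    using letter_mirror_in_gap[OF \<mu>(1,3)] mirror_eq[OF assms] by simp
qed

lemma mirror_mirror:
  assumes "in_gap \<mu> t"
  shows "mirror (mirror t) = t"
proof -
  have \<mu>: "Suc \<mu> < card (set w)" "marker \<mu> < t" "t \<le> marker \<mu> + gap \<mu>"
    using assms by (simp_all add: in_gap_def)
  show ?thesis
    using mirror_eq[OF mirror_in_gap[OF assms]] mirror_eq[OF assms] gap_next_marker_pred[OF \<mu>(1)]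
      marker_before_marker_Suc[OF \<mu>(1)] gap_less_marker_Suc[OF \<mu>(1)] next_marker[OF \<mu>(1)]
      next_marker_pos[OF \<mu>(1)] \<mu>
    by simp
qed

lemma mirror_fixed:
  assumes "in_gap \<mu> t" "mirror t = t"
  shows "next_marker \<mu> - 1 = \<mu>" "2 * t = marker \<mu> + marker (Suc \<mu>)"
proof -
  show "next_marker \<mu> - 1 = \<mu>"
    using in_gap_unique mirror_in_gap assms by metis
  show "2 * t = marker \<mu> + marker (Suc \<mu>)"
    using assms mirror_eq[OF assms(1)] gap_less_marker_Suc[of \<mu>] by (auto simp: in_gap_def)
qed

section \<open>The palindromic special factorization\<close>

lemma count_list_eq_Suc_card_gap_positions:
  assumes "c \<in> set w"
  shows "count_list w c = Suc (card {t. t < length w \<and> \<not> is_marker t \<and> letter t = c})"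
proof -
  obtain i where i: "i < card (set w)" "letters w ! i = c"
    using letters_index[OF assms] by auto
  have "count_list w c = card {t. t < length w \<and> w ! t = c}"
    unfolding count_list_eq_length_filter length_filter_conv_card by (simp add: eq_commute)
  also have "{t. t < length w \<and> w ! t = c}
      = insert (marker i) {t. t < length w \<and> \<not> is_marker t \<and> letter t = c}"
  proof (intro set_eqI iffI)
    fix t assume t: "t \<in> {t. t < length w \<and> w ! t = c}"
    show "t \<in> insert (marker i) {t. t < length w \<and> \<not> is_marker t \<and> letter t = c}"
    proof (cases "is_marker t")
      case True
      then obtain j where "j < card (set w)" "t mod length w = marker j" "letter t = letters w ! j"
        by (rule is_marker_imp_marker)
      moreover have "letters w ! j = letters w ! i"
        using calculation t i letter_eq_nth by simp
      then have "j = i"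
        using \<open>j < card (set w)\<close> i(1) letters_nth_eq_iff by blast
      ultimately show ?thesis using t by simp
    qed (use t letter_eq_nth in simp)
  next
    fix t assume "t \<in> insert (marker i) {t. t < length w \<and> \<not> is_marker t \<and> letter t = c}"
    then show "t \<in> {t. t < length w \<and> w ! t = c}"
      using marker[OF i(1)] letter_marker[OF i(1)] i(2) letter_eq_nth by auto
  qed
  also have "card \<dots> = Suc (card {t. t < length w \<and> \<not> is_marker t \<and> letter t = c})"
    using is_marker_marker[OF i(1)] by (subst card_insert_disjoint) auto
  finally show ?thesis .
qed

lemma even_count_imp_mirror_fixpoint:
  assumes "c \<in> set w" "even (count_list w c)"
  shows "\<exists>t \<mu>. in_gap \<mu> t \<and> letter t = c \<and> mirror t = t"
proof -
  define N where "N = {t. t < length w \<and> \<not> is_marker t \<and> letter t = c}"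
  have "odd (card N)"
    using count_list_eq_Suc_card_gap_positions[OF assms(1)] assms(2) by (simp add: N_def)
  moreover have "mirror t \<in> N" "mirror (mirror t) = t" if t: "t \<in> N" for t
  proof -
    obtain \<mu> where \<mu>: "in_gap \<mu> t"
      using ex_in_gap t by (auto simp: N_def)
    then show "mirror (mirror t) = t"
      by (rule mirror_mirror)
    show "mirror t \<in> N"
      using in_gapD[OF mirror_in_gap[OF \<mu>]] letter_mirror[OF \<mu>] t by (simp add: N_def)
  qed
  ultimately obtain t where t: "t \<in> N" "mirror t = t"
    using involution_fixpoint_if_odd_card[of N mirror] by (auto simp: N_def)
  then obtain \<mu> where "in_gap \<mu> t"
    using ex_in_gap by (auto simp: N_def)
  then show ?thesis
    using t by (auto simp: N_def)
qed

text \<open>A letter of even multiplicity occurs at the centre of a gap that is its own mirror.\<close>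

lemma card_even_count_letters_le:
  "card {c \<in> set w. even (count_list w c)} \<le> card {\<mu>. Suc \<mu> < card (set w) \<and> next_marker \<mu> - 1 = \<mu>}"
proof -
  define E where "E = {c \<in> set w. even (count_list w c)}"
  define fix_pt where "fix_pt c = (SOME t. \<exists>\<mu>. in_gap \<mu> t \<and> letter t = c \<and> mirror t = t)" for c
  have fix_pt: "\<exists>\<mu>. in_gap \<mu> (fix_pt c) \<and> letter (fix_pt c) = c \<and> mirror (fix_pt c) = fix_pt c"
    if "c \<in> E" for c
    using someI_ex[OF even_count_imp_mirror_fixpoint[of c]] that by (simp add: E_def fix_pt_def)
  have "gap_of (fix_pt c) \<in> {\<mu>. Suc \<mu> < card (set w) \<and> next_marker \<mu> - 1 = \<mu>}" if "c \<in> E" for c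
    using fix_pt[OF that] gap_of_eq mirror_fixed(1) by (fastforce simp: in_gap_def)
  moreover have "inj_on (\<lambda>c. gap_of (fix_pt c)) E"
  proof (rule inj_onI)
    fix c d assume "c \<in> E" "d \<in> E" and eq: "gap_of (fix_pt c) = gap_of (fix_pt d)"
    then obtain \<mu> \<nu> where "in_gap \<mu> (fix_pt c)" "mirror (fix_pt c) = fix_pt c"
      "in_gap \<nu> (fix_pt d)" "mirror (fix_pt d) = fix_pt d"
      and letters: "letter (fix_pt c) = c" "letter (fix_pt d) = d"
      using fix_pt by blast
    then have "fix_pt c = fix_pt d"
      using eq gap_of_eq mirror_fixed(2) by (metis mult_cancel_left zero_neq_numeral)
    then show "c = d" using letters by metis
  qed
  moreover have "finite {\<mu>. Suc \<mu> < card (set w) \<and> next_marker \<mu> - 1 = \<mu>}"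
    by (rule finite_subset[of _ "{..<card (set w)}"]) auto
  ultimately show ?thesis
    unfolding E_def[symmetric] by (intro card_inj_on_le) auto
qed

text \<open>If the gap after marker mu were not the one before marker (mu+1), at most
  card (set w) - 3 gaps would be their own mirror, whereas at least card (set w) - 2 letters
  have even multiplicity since w is a product of two palindromes.\<close>

lemma next_marker_eq_Suc:
  assumes "Suc \<mu> < card (set w)"
  shows "next_marker \<mu> = Suc \<mu>"
proof (rule ccontr)
  assume ne: "next_marker \<mu> \<noteq> Suc \<mu>"
  define SP where "SP = {\<mu>. Suc \<mu> < card (set w) \<and> next_marker \<mu> - 1 = \<mu>}"
  define \<nu> where "\<nu> = next_marker \<mu> - 1"
  have \<nu>: "Suc \<nu> < card (set w)" "next_marker \<nu> = Suc \<mu>" "\<nu> \<noteq> \<mu>"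
    using gap_next_marker_pred[OF assms] next_marker_pos[OF assms] ne by (auto simp: \<nu>_def)
  then have "SP \<subseteq> {..<card (set w) - 1} - {\<mu>, \<nu>}"
    by (auto simp: SP_def \<nu>_def)
  then have "card SP \<le> card (set w) - 3"
    using card_mono[of "{..<card (set w) - 1} - {\<mu>, \<nu>}" SP] assms \<nu> by (simp add: card_Diff_subset)
  moreover have
    "card {c \<in> set w. even (count_list w c)} + card {c \<in> set w. odd (count_list w c)} = card (set w)"
    by (subst card_Un_disjoint[symmetric]) (auto intro: arg_cong[where f = card])
  moreover have "card {c \<in> set w. odd (count_list w c)} \<le> 2"
    using product_of_two_palindromes card_odd_count_letters_le_2 by blast
  ultimately show False
    using card_even_count_letters_le assms \<nu> unfolding SP_def by linarith
qed

lemma marker_Suc: "Suc \<mu> < card (set w) \<Longrightarrow> marker (Suc \<mu>) = Suc (marker \<mu>) + gap \<mu>"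
  using next_marker(2) next_marker_eq_Suc by simp

lemma palindrome_gap:
  assumes "Suc i < card (set w)"
  shows "palindrome (take (gap i) (drop (Suc (marker i)) w))" (is "palindrome ?p")
proof -
  have bound: "Suc (marker i) + gap i < length w"
    using gap(1)[OF assms] .
  then have p: "length ?p = gap i" "\<And>m. m < gap i \<Longrightarrow> ?p ! m = letter (Suc (marker i) + m)"
    by (simp_all add: letter_eq_nth)
  show ?thesis
    unfolding palindrome_def
  proof (rule nth_equalityI)
    fix m assume "m < length (rev ?p)"
    then have m: "m < gap i" using p by simp
    moreover have "Suc (marker i) + (gap i - Suc m) = marker (Suc i) - Suc m"
      using marker_Suc[OF assms] m by simp
    ultimately have "rev ?p ! m = letter (marker (Suc i) - Suc m)"
      using p(2)[of "gap i - Suc m"] p(1) by (simp add: rev_nth)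
    also have "\<dots> = ?p ! m"
      using letter_mirror_in_gap[OF assms m] p(2)[OF m] by simp
    finally show "rev ?p ! m = ?p ! m" .
  qed simp
qed

lemma palindromic_special_factorization:
  "\<exists>ps. special_factorization w ps \<and> (\<forall>p\<in>set ps. palindrome p)"
proof -
  define K where "K = card (set w) - 1"
  define ps where "ps = map (\<lambda>i. take (marker (Suc i) - Suc (marker i)) (drop (Suc (marker i)) w)) [0..<K]"
  have K: "Suc K = card (set w)"
    using card_set_pos by (simp add: K_def)
  have "w = interleave (letters w) ps"
    unfolding ps_def
  proof (rule interleave_at_positions)
    show "marker i < marker (Suc i)" if "i < K" for i
      using marker_Suc[of i] that K by simp
    show "w ! marker i = letters w ! i" if "i \<le> K" for i
      using letter_marker[of i] marker[of i] letter_eq_nth that K by simp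
  qed (use K length_pos marker_0 marker_last in \<open>simp_all add: K_def\<close>)
  then have "special_factorization w ps"
    using length_pos K by (simp add: special_factorization_def interleave_def ps_def)
  moreover have "palindrome p" if "p \<in> set ps" for p
    using that palindrome_gap marker_Suc K by (auto simp: ps_def)
  ultimately show ?thesis by blast
qed

end

theorem theorem3p1:
  fixes w :: "'a::{linorder,finite} list"
  assumes "primitive w"
  shows "((perfectly_clustering w \<and> lyndon w) \<longleftrightarrow>
            ((\<exists>x y. w = x @ y \<and> palindrome x \<and> palindrome y) \<and>
             (\<exists>ps. special_factorization w ps \<and> (\<forall>p\<in>set ps. palindrome p))))
       \<and> ((perfectly_clustering w \<and> lyndon w) \<longleftrightarrow>
            (\<exists>ps. special_factorization w ps \<and> conjugate w (bigW w ps)))"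
proof -
  have i_ii: "(\<exists>x y. w = x @ y \<and> palindrome x \<and> palindrome y) \<and>
      (\<exists>ps. special_factorization w ps \<and> (\<forall>p\<in>set ps. palindrome p))"
    if "perfectly_clustering w \<and> lyndon w"
  proof -
    interpret perfectly_clustering_lyndon w
      using that by unfold_locales simp_all
    show ?thesis
      using product_of_two_palindromes palindromic_special_factorization by blast
  qed
  have ii_iii: "\<exists>ps. special_factorization w ps \<and> conjugate w (bigW w ps)"
    if "(\<exists>x y. w = x @ y \<and> palindrome x \<and> palindrome y) \<and>
        (\<exists>ps. special_factorization w ps \<and> (\<forall>p\<in>set ps. palindrome p))"
    using that conjugate_bigW_if_palindromic by blast
  have iii_i: "perfectly_clustering w \<and> lyndon w"
    if "\<exists>ps. special_factorization w ps \<and> conjugate w (bigW w ps)"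
    using that conjugate_bigW_imp_perfectly_clustering_lyndon[OF assms] by blast
  show ?thesis
    using i_ii ii_iii iii_i by blast
qed

end
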